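(* Let $Q\in\mathbb{N}$, $\mathcal{S}\subseteq B(0,Q^{1/2})\cap(\mathbb{Z}[i]\setminus\{0\})$, $\Delta>0$, $\tau=\Delta^{-1/4}$. Let $b,r\in\mathbb{Z}[i]$ with $(b,r)=1$ and $0<|r|\le\tau$, and let $z\in\mathbb{C}$ with $\Delta^{1/2}\le|z|<\frac{2}{|r|\tau}$. Let $\delta>0$ satisfy $$\frac{\sqrt{Q}\,\Delta^{1/2}}{|z|}\le\delta^{1/2}\le\sqrt{Q}.$$ For $\mu\in\mathbb{C}$, $\nu\ge0$ let $J(\mu,\nu)=B(rz\mu,2|rz|\nu)$, and for $y\in\mathbb{C}$ let $$\Pi(y,\delta)=\sum_{q\in\mathcal{S}\cap B(y,\delta^{1/2})}\ \Big|\big\{m\in\mathbb{Z}[i]\cap J(y,\delta^{1/2}):\ m\equiv -bq\bmod r,\ m\ne0\big\}\Big|.$$ Then $$P\Big(\frac{b}{r}+z\Big)\le 16+\frac{4}{\pi\delta}\int_{B(0,\sqrt{Q})}\Pi(y,\delta)\,dy,$$ where $dy$ is Lebesgue measure on $\mathbb{C}\cong\mathbb{R}^2$.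
   Context: $\mathbb{Z}[i]$ are the Gaussian integers; $B(y,u)=\{w\in\mathbb{C}:|w-y|\le u\}$. For $\alpha\in\mathbb{C}$, $$P(\alpha)=\Big|\Big\{(a,q)\in\mathbb{Z}[i]\times\mathcal{S}:\ (a,q)=1,\ \Big|\frac{a}{q}-\alpha\Big|\le\Delta^{1/2}\Big\}\Big|.$$ *)

theory Defs
  imports "HOL-Analysis.Analysis"
begin

definition gauss_ints :: "complex set" where
  "gauss_ints = {z. Re z \<in> \<int> \<and> Im z \<in> \<int>}"

definition gdvd :: "complex \<Rightarrow> complex \<Rightarrow> bool" where
  "gdvd a b \<longleftrightarrow> (\<exists>c\<in>gauss_ints. b = a * c)"

definition gcoprime :: "complex \<Rightarrow> complex \<Rightarrow> bool" where
  "gcoprime a b \<longleftrightarrow> (\<forall>d\<in>gauss_ints. gdvd d a \<and> gdvd d b \<longrightarrow> gdvd d 1)"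

definition gcong :: "complex \<Rightarrow> complex \<Rightarrow> complex \<Rightarrow> bool" where
  "gcong m n r \<longleftrightarrow> gdvd r (m - n)"

definition Pcount :: "complex set \<Rightarrow> real \<Rightarrow> complex \<Rightarrow> nat" where
  "Pcount S \<Delta> \<alpha> = card {(a, q). a \<in> gauss_ints \<and> q \<in> S \<and> gcoprime a q \<and>
       cmod (a / q - \<alpha>) \<le> sqrt \<Delta>}"

definition Jball :: "complex \<Rightarrow> complex \<Rightarrow> complex \<Rightarrow> real \<Rightarrow> complex set" where
  "Jball r z \<mu> \<nu> = cball (r * z * \<mu>) (2 * cmod (r * z) * \<nu>)"

definition Pisum :: "complex set \<Rightarrow> complex \<Rightarrow> complex \<Rightarrow> complex \<Rightarrow> complex \<Rightarrow> real \<Rightarrow> nat" where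
  "Pisum S b r z y \<delta> = (\<Sum>q\<in>S \<inter> cball y (sqrt \<delta>).
      card {m \<in> gauss_ints \<inter> Jball r z y (sqrt \<delta>). gcong m (- b * q) r \<and> m \<noteq> 0})"

end

(* Split the pairs (a, q) counted by P(b/r + z) according to whether a/q = b/r.

   Pairs with a/q = b/r are coprime representations of one fraction w. The denominators
   of representations of w form an ideal of Z[i], which is principal, and coprimality forces
   every such denominator to be a unit multiple of its generator: at most 4 pairs.

   For the other pairs, m = a r - b q is a nonzero Gaussian integer with m = -b q mod r, and
   |m - r z q| = |q r| |a/q - b/r - z| <= |r z| delta^(1/2) by the lower bound on delta. So
   (q, m) is counted by Pi(y, delta) for every y in B(q, delta^(1/2)), in particular on a disc
   of area pi delta / 4 inside B(0, sqrt Q). As (a, q) -> (q, m) is injective, integrating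
   over B(0, sqrt Q) bounds pi delta / 4 times the number of these pairs by the integral. *)

theory Submission
  imports Defs
begin

lemma gauss_ints_diff [intro]: "a \<in> gauss_ints \<Longrightarrow> b \<in> gauss_ints \<Longrightarrow> a - b \<in> gauss_ints"
  by (simp add: gauss_ints_def)

lemma gauss_ints_mult [intro]: "a \<in> gauss_ints \<Longrightarrow> b \<in> gauss_ints \<Longrightarrow> a * b \<in> gauss_ints"
  by (simp add: gauss_ints_def)

lemma finite_gauss_ints_cball: "finite (gauss_ints \<inter> cball c R)"
proof -
  define N where "N = \<lceil>cmod c + R\<rceil>"
  have "gauss_ints \<inter> cball c R \<subseteq> (\<lambda>(x, y). Complex (of_int x) (of_int y)) ` ({-N..N} \<times> {-N..N})"
  proof
    fix w assume w: "w \<in> gauss_ints \<inter> cball c R"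
    then obtain x y where xy: "Re w = of_int x" "Im w = of_int y"
      by (auto simp: gauss_ints_def elim!: Ints_cases)
    have "cmod w \<le> cmod c + R"
      using w norm_triangle_ineq2[of w c] by (auto simp: dist_norm norm_minus_commute)
    then have "\<bar>Re w\<bar> \<le> cmod c + R" "\<bar>Im w\<bar> \<le> cmod c + R"
      using abs_Re_le_cmod[of w] abs_Im_le_cmod[of w] by linarith+
    then have "\<bar>x\<bar> \<le> N" "\<bar>y\<bar> \<le> N"
      unfolding N_def xy by (metis ceiling_mono ceiling_of_int of_int_abs)+
    moreover have "w = Complex (of_int x) (of_int y)"
      using xy by (simp add: complex_eq_iff)
    ultimately show "w \<in> (\<lambda>(x, y). Complex (of_int x) (of_int y)) ` ({-N..N} \<times> {-N..N})"
      by force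
  qed
  then show ?thesis
    by (rule finite_subset) auto
qed

lemma gauss_ints_unit:
  assumes "u \<in> gauss_ints" "v \<in> gauss_ints" "u * v = 1"
  shows "u \<in> set [1, -1, \<i>, -\<i>]"
proof -
  obtain x y where xy: "Re u = of_int x" "Im u = of_int y"
    using assms(1) by (auto simp: gauss_ints_def elim!: Ints_cases)
  obtain x' y' where xy': "Re v = of_int x'" "Im v = of_int y'"
    using assms(2) by (auto simp: gauss_ints_def elim!: Ints_cases)
  have "(cmod u)\<^sup>2 * (cmod v)\<^sup>2 = 1"
    using assms(3) by (metis norm_mult norm_one power_mult_distrib one_power2)
  then have "real_of_int ((x\<^sup>2 + y\<^sup>2) * (x'\<^sup>2 + y'\<^sup>2)) = 1"
    unfolding cmod_power2 xy xy' by simp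
  then have "(x\<^sup>2 + y\<^sup>2) * (x'\<^sup>2 + y'\<^sup>2) = 1"
    by linarith
  then have norm1: "x\<^sup>2 + y\<^sup>2 = 1"
    using pos_zmult_eq_1_iff_lemma[of "x\<^sup>2 + y\<^sup>2"] by (smt (verit) zero_le_power2)
  then have "x\<^sup>2 \<le> 1" "y\<^sup>2 \<le> 1"
    by (smt (verit) zero_le_power2)+
  then have "\<bar>x\<bar> \<le> 1" "\<bar>y\<bar> \<le> 1"
    by (simp_all add: abs_square_le_1)
  then have "x \<in> {-1, 0, 1}" "y \<in> {-1, 0, 1}"
    by auto
  with norm1 have "(x, y) \<in> {(1, 0), (-1, 0), (0, 1), (0, -1)}"
    by auto
  then show ?thesis
    using xy by (auto simp: complex_eq_iff)
qed

lemma gauss_ints_nearest: "\<exists>k\<in>gauss_ints. cmod (t - k) < 1"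
proof
  let ?k = "Complex (of_int (round (Re t))) (of_int (round (Im t)))"
  have "\<bar>Re (t - ?k)\<bar> \<le> 1/2" "\<bar>Im (t - ?k)\<bar> \<le> 1/2"
    using of_int_round_abs_le[of "Re t"] of_int_round_abs_le[of "Im t"]
    by (simp_all add: abs_minus_commute)
  from this[THEN power_mono[OF _ abs_ge_zero, of _ _ 2]]
  have "(Re (t - ?k))\<^sup>2 \<le> 1/4" "(Im (t - ?k))\<^sup>2 \<le> 1/4"
    by (simp_all add: power_divide)
  then have "(cmod (t - ?k))\<^sup>2 < 1\<^sup>2"
    unfolding cmod_power2 by simp
  then show "cmod (t - ?k) < 1"
    by (rule power_less_imp_less_base) simp
qed (simp add: gauss_ints_def)

lemma gauss_ints_ideal_principal:
  assumes sub: "L \<subseteq> gauss_ints"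
    and diff: "\<And>x y. x \<in> L \<Longrightarrow> y \<in> L \<Longrightarrow> x - y \<in> L"
    and mult: "\<And>k x. k \<in> gauss_ints \<Longrightarrow> x \<in> L \<Longrightarrow> k * x \<in> L"
    and nonzero: "x1 \<in> L" "x1 \<noteq> 0"
  obtains g where "g \<in> L" "g \<noteq> 0" "\<And>x. x \<in> L \<Longrightarrow> \<exists>k\<in>gauss_ints. x = k * g"
proof -
  define M where "M = (L - {0}) \<inter> cball 0 (cmod x1)"
  have "finite M"
    unfolding M_def using sub by (intro finite_subset[OF _ finite_gauss_ints_cball[of 0 "cmod x1"]]) auto
  moreover have "M \<noteq> {}"
    unfolding M_def using nonzero by auto
  ultimately obtain g where "is_arg_min cmod (\<lambda>y. y \<in> M) g"
    using ex_is_arg_min_if_finite by blast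
  then have g: "g \<in> L" "g \<noteq> 0" "cmod g \<le> cmod x1" and g_min: "\<And>y. y \<in> M \<Longrightarrow> cmod g \<le> cmod y"
    unfolding is_arg_min_def M_def by (auto simp: not_less)
  have g_le: "cmod g \<le> cmod y" if "y \<in> L" "y \<noteq> 0" for y
  proof (cases "cmod y \<le> cmod x1")
    case True
    then show ?thesis
      using g_min[of y] that unfolding M_def by simp
  qed (use g in simp)
  have gen: "\<exists>k\<in>gauss_ints. x = k * g" if x: "x \<in> L" for x
  proof -
    obtain k where k: "k \<in> gauss_ints" "cmod (x / g - k) < 1"
      using gauss_ints_nearest by blast
    have "x - k * g \<in> L"
      using diff[OF x mult[OF k(1) g(1)]] .
    moreover have "cmod (x - k * g) < cmod g"
    proof -
      have "x - k * g = g * (x / g - k)"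
        using g by (simp add: field_simps)
      then show ?thesis
        using k(2) g by (simp add: norm_mult)
    qed
    ultimately have "x - k * g = 0"
      using g_le by force
    then show ?thesis
      using k(1) by auto
  qed
  show ?thesis
    by (rule that[OF g(1,2) gen])
qed

lemma card_coprime_fractions_le_4:
  assumes A: "A \<subseteq> {(a, q). a \<in> gauss_ints \<and> q \<in> gauss_ints \<and> q \<noteq> 0 \<and> gcoprime a q \<and> a = q * w}"
  shows "card A \<le> 4"
proof (cases "A = {}")
  case False
  define L where "L = {x \<in> gauss_ints. x * w \<in> gauss_ints}"
  from False obtain a1 q1 where "(a1, q1) \<in> A"
    by auto
  then have q1: "q1 \<in> L" "q1 \<noteq> 0"
    using A unfolding L_def by auto
  have L_sub: "L \<subseteq> gauss_ints"
    unfolding L_def by blast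
  have L_diff: "x - y \<in> L" if "x \<in> L" "y \<in> L" for x y
    using that unfolding L_def by (auto simp: left_diff_distrib)
  have L_mult: "k * x \<in> L" if "k \<in> gauss_ints" "x \<in> L" for k x
    using that unfolding L_def by (auto simp: mult.assoc)
  obtain g where g: "g \<in> L" and gen: "\<And>x. x \<in> L \<Longrightarrow> \<exists>k\<in>gauss_ints. x = k * g"
    using gauss_ints_ideal_principal[of L q1, OF L_sub L_diff L_mult q1] by metis
  have gw: "g \<in> gauss_ints" "g * w \<in> gauss_ints"
    using g unfolding L_def by simp_all
  define units :: "complex list" where "units = [1, -1, \<i>, -\<i>]"
  have "A \<subseteq> (\<lambda>u. (u * (g * w), u * g)) ` set units"
  proof
    fix p assume "p \<in> A"
    obtain a q where p: "p = (a, q)"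
      by fastforce
    have a: "a \<in> gauss_ints" "a = q * w" and q: "q \<in> gauss_ints" and cop: "gcoprime a q"
      using A \<open>p \<in> A\<close> unfolding p by auto
    obtain k where k: "k \<in> gauss_ints" "q = k * g"
      using gen[of q] q a unfolding L_def by auto
    then have "gdvd k a" "gdvd k q"
      using a gw unfolding gdvd_def by (auto simp: mult.assoc)
    then have "gdvd k 1"
      using cop k(1) unfolding gcoprime_def by blast
    then obtain c where "c \<in> gauss_ints" "k * c = 1"
      unfolding gdvd_def by auto
    then have "k \<in> set units"
      unfolding units_def using gauss_ints_unit k(1) by blast
    then show "p \<in> (\<lambda>u. (u * (g * w), u * g)) ` set units"
      using p a k by (auto simp: mult.assoc)
  qed
  then have "card A \<le> card ((\<lambda>u. (u * (g * w), u * g)) ` set units)"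
    by (intro card_mono) auto
  also have "\<dots> \<le> length units"
    using card_image_le[of "set units"] card_length[of units] by (meson List.finite_set order_trans)
  finally show ?thesis
    unfolding units_def by simp
qed simp

lemma ex_half_cball_subset_Int_cball:
  fixes q :: "'a::real_normed_vector"
  assumes "norm q \<le> s" "0 < \<rho>" "\<rho> \<le> s"
  shows "\<exists>c. cball c (\<rho> / 2) \<subseteq> cball 0 s \<inter> cball q \<rho>"
proof (cases "norm q \<le> \<rho> / 2")
  case True
  have "cball 0 (\<rho> / 2) \<subseteq> cball 0 s \<inter> cball q \<rho>"
  proof
    fix y assume "y \<in> cball (0::'a) (\<rho> / 2)"
    then have "norm y \<le> \<rho> / 2"
      by simp
    moreover have "norm (q - y) \<le> norm q + norm y"
      by (rule norm_triangle_ineq4)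
    ultimately show "y \<in> cball 0 s \<inter> cball q \<rho>"
      using True assms by (simp add: dist_norm)
  qed
  then show ?thesis ..
next
  case False
  define t where "t = \<rho> / (2 * norm q)"
  have t: "0 \<le> t" "t \<le> 1" "t * norm q = \<rho> / 2"
    using False assms(2) by (auto simp: t_def divide_le_eq)
  define c where "c = (1 - t) *\<^sub>R q"
  have "norm c = (1 - t) * norm q"
    using t(2) by (simp add: c_def)
  then have norm_c: "norm c = norm q - \<rho> / 2"
    using t(3) by (simp add: left_diff_distrib)
  have "q - c = t *\<^sub>R q"
    by (simp add: c_def algebra_simps)
  then have dist_qc: "norm (q - c) = \<rho> / 2"
    using t by simp
  have "cball c (\<rho> / 2) \<subseteq> cball 0 s \<inter> cball q \<rho>"
  proof (intro subsetI IntI)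
    fix y assume "y \<in> cball c (\<rho> / 2)"
    then have y: "dist c y \<le> \<rho> / 2"
      by simp
    show "y \<in> cball 0 s"
      using norm_triangle_sub[of y c] y norm_c assms(1)
      by (simp add: dist_norm norm_minus_commute)
    show "y \<in> cball q \<rho>"
      using dist_triangle[of q y c] y dist_qc
      by (simp add: dist_norm)
  qed
  then show ?thesis ..
qed

lemma measure_lborel_cball_complex: "0 \<le> R \<Longrightarrow> measure lborel (cball (c::complex) R) = pi * R\<^sup>2"
  by (simp add: content_cball unit_ball_vol_2)

lemma integrable_card_closed_sets:
  fixes C :: "'b \<Rightarrow> 'a::euclidean_space set"
  assumes "finite A" "\<And>a. a \<in> A \<Longrightarrow> closed (C a)" "compact K"
  shows "(\<lambda>y. real (card {a \<in> A. y \<in> C a})) integrable_on K"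
proof -
  have card_eq: "real (card {a \<in> A. y \<in> C a}) = (\<Sum>a\<in>A. indicator (C a) y)" for y
    using assms(1) by (simp add: indicator_def of_bool_def sum.If_cases Int_def)
  have "(\<lambda>y. \<Sum>a\<in>A. indicat_real (C a) y) integrable_on K"
    using assms by (intro integrable_sum) (simp_all add: integrable_on_indicator closed_Int_compact lmeasurable_compact)
  then show ?thesis
    unfolding card_eq .
qed

lemma card_mult_measure_le_integral:
  fixes D :: "'b \<Rightarrow> 'a::euclidean_space set" and g :: "'a \<Rightarrow> real" and v :: real
  assumes "finite X"
    and D: "\<And>x. x \<in> X \<Longrightarrow> D x \<in> lmeasurable" "\<And>x. x \<in> X \<Longrightarrow> D x \<subseteq> K"
      "\<And>x. x \<in> X \<Longrightarrow> measure lebesgue (D x) = v"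
    and g: "g integrable_on K" "\<And>y. y \<in> K \<Longrightarrow> card {x \<in> X. y \<in> D x} \<le> g y"
  shows "card X * v \<le> integral K g"
proof -
  define f where "f y = (\<Sum>x\<in>X. indicator (D x) y :: real)" for y
  have D_int: "D x \<inter> K = D x" if "x \<in> X" for x
    using D(2)[OF that] by blast
  have f_integrable: "f integrable_on K"
    unfolding f_def using D(1) by (intro integrable_sum \<open>finite X\<close>) (simp add: integrable_on_indicator D_int)
  have "integral K f = (\<Sum>x\<in>X. integral K (indicat_real (D x)))"
    unfolding f_def using D(1) by (intro integral_sum \<open>finite X\<close>) (simp add: integrable_on_indicator D_int)
  also have "\<dots> = card X * v"
    using D by (simp add: integral_indicator D_int)
  finally have "integral K f = card X * v" .
  moreover have "f y = card {x \<in> X. y \<in> D x}" for y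
    unfolding f_def using \<open>finite X\<close> by (simp add: indicator_def of_bool_def sum.If_cases Int_def)
  then have "integral K f \<le> integral K g"
    using g by (intro integral_le f_integrable) simp_all
  ultimately show ?thesis
    by simp
qed

lemma Pisum_eq_card_Sigma:
  assumes "finite S"
  shows "Pisum S b r z y \<delta> = card (SIGMA q : S \<inter> cball y (sqrt \<delta>).
    {m \<in> gauss_ints \<inter> Jball r z y (sqrt \<delta>). gcong m (- b * q) r \<and> m \<noteq> 0})"
  unfolding Pisum_def Jball_def using assms
  by (intro card_SigmaI[symmetric]) (auto intro: finite_subset[OF _ finite_gauss_ints_cball])

lemma integrable_Pisum:
  assumes "finite S" "compact K"
  shows "(\<lambda>y. real (Pisum S b r z y \<delta>)) integrable_on K"
proof -
  obtain s where s: "\<And>y. y \<in> K \<Longrightarrow> cmod y \<le> s"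
    using compact_imp_bounded[OF assms(2)] bounded_pos by blast
  define R where "R = 2 * cmod (r * z) * sqrt \<delta>"
  define A where "A = (SIGMA q : S. {m \<in> gauss_ints \<inter> cball 0 (cmod (r * z) * s + R).
    gcong m (- b * q) r \<and> m \<noteq> 0})"
  define C where "C p = cball (fst p) (sqrt \<delta>) \<inter> {y. dist (r * z * y) (snd p) \<le> R}" for p
  have "finite A"
    unfolding A_def
    by (intro finite_SigmaI assms(1) finite_subset[OF _ finite_gauss_ints_cball]) blast
  moreover have "closed (C p)" for p
    unfolding C_def by (intro closed_Int closed_cball closed_Collect_le continuous_intros)
  ultimately have card_integrable: "(\<lambda>y. real (card {p \<in> A. y \<in> C p})) integrable_on K"
    using assms(2) by (rule integrable_card_closed_sets)
  have card_eq: "card {p \<in> A. y \<in> C p} = Pisum S b r z y \<delta>" if y: "y \<in> K" for y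
  proof -
    have "cmod m \<le> cmod (r * z) * s + R" if "dist (r * z * y) m \<le> R" for m
    proof -
      have "cmod m \<le> cmod (r * z * y) + R"
        using that norm_triangle_sub[of m "r * z * y"] by (simp add: dist_norm norm_minus_commute)
      also have "cmod (r * z * y) \<le> cmod (r * z) * s"
        unfolding norm_mult[of "r * z"] using s[OF y] by (intro mult_left_mono) simp_all
      finally show ?thesis
        by simp
    qed
    then have "{p \<in> A. y \<in> C p} = (SIGMA q : S \<inter> cball y (sqrt \<delta>).
        {m \<in> gauss_ints \<inter> Jball r z y (sqrt \<delta>). gcong m (- b * q) r \<and> m \<noteq> 0})"
      unfolding A_def C_def Jball_def R_def by (auto simp: dist_commute)
    then show ?thesis
      using Pisum_eq_card_Sigma[OF assms(1)] by simp
  qed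
  show ?thesis
    by (rule integrable_eq[OF card_integrable]) (simp add: card_eq)
qed

lemma numerator_mem_Jball:
  assumes "q \<noteq> 0" "r \<noteq> 0" "cmod (a / q - (b / r + z)) \<le> \<epsilon>" "cmod q * \<epsilon> \<le> \<rho> * cmod z"
    and "cmod (y - q) \<le> \<rho>"
  shows "a * r - b * q \<in> Jball r z y \<rho>"
proof -
  have "a * r - b * q - r * z * q = (q * r) * (a / q - (b / r + z))"
    using assms(1,2) by (simp add: field_simps)
  then have "cmod (a * r - b * q - r * z * q) = cmod (q * r) * cmod (a / q - (b / r + z))"
    by (simp only: norm_mult)
  also have "\<dots> \<le> cmod (q * r) * \<epsilon>"
    using assms(3) by (rule mult_left_mono) simp
  also have "\<dots> = cmod r * (cmod q * \<epsilon>)"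
    by (simp add: norm_mult)
  also have "\<dots> \<le> cmod r * (\<rho> * cmod z)"
    using assms(4) by (rule mult_left_mono) simp
  also have "\<dots> = cmod (r * z) * \<rho>"
    by (simp add: norm_mult)
  finally have "dist (r * z * q) (a * r - b * q) \<le> cmod (r * z) * \<rho>"
    by (simp add: dist_norm norm_minus_commute)
  moreover have "dist (r * z * y) (r * z * q) \<le> cmod (r * z) * \<rho>"
    using assms(5) by (simp add: dist_norm norm_mult mult_left_mono norm_minus_commute flip: right_diff_distrib)
  ultimately show ?thesis
    unfolding Jball_def using dist_triangle[of "r * z * y" "a * r - b * q" "r * z * q"] by simp
qed

lemma card_close_fractions_le_Pisum:
  assumes "finite S" "S \<subseteq> gauss_ints - {0}" "b \<in> gauss_ints" "r \<in> gauss_ints" "r \<noteq> 0"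
    and "\<And>q. q \<in> S \<Longrightarrow> cmod q * \<epsilon> \<le> sqrt \<delta> * cmod z"
    and X: "X \<subseteq> {(a, q). a \<in> gauss_ints \<and> q \<in> S \<and> a * r \<noteq> b * q \<and>
      cmod (a / q - (b / r + z)) \<le> \<epsilon> \<and> cmod (y - q) \<le> sqrt \<delta>}"
  shows "card X \<le> Pisum S b r z y \<delta>"
  unfolding Pisum_eq_card_Sigma[OF assms(1)]
proof (rule card_inj_on_le[where f = "\<lambda>(a, q). (q, a * r - b * q)"])
  show "inj_on (\<lambda>(a, q). (q, a * r - b * q)) X"
    using assms(5) by (auto simp: inj_on_def)
  show "finite (SIGMA q : S \<inter> cball y (sqrt \<delta>).
      {m \<in> gauss_ints \<inter> Jball r z y (sqrt \<delta>). gcong m (- b * q) r \<and> m \<noteq> 0})"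
    unfolding Jball_def
    by (intro finite_SigmaI finite_Int disjI1 assms(1) finite_subset[OF _ finite_gauss_ints_cball]) blast
  show "(\<lambda>(a, q). (q, a * r - b * q)) ` X \<subseteq> (SIGMA q : S \<inter> cball y (sqrt \<delta>).
      {m \<in> gauss_ints \<inter> Jball r z y (sqrt \<delta>). gcong m (- b * q) r \<and> m \<noteq> 0})"
  proof clarify
    fix a q assume "(a, q) \<in> X"
    then have a: "a \<in> gauss_ints" and q: "q \<in> S" "q \<noteq> 0" and ne: "a * r \<noteq> b * q"
      and close: "cmod (a / q - (b / r + z)) \<le> \<epsilon>" and yq: "cmod (y - q) \<le> sqrt \<delta>"
      using X assms(2) by auto
    have "a * r - b * q \<in> Jball r z y (sqrt \<delta>)"
      using numerator_mem_Jball[OF q(2) assms(5) close assms(6)[OF q(1)] yq] .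
    moreover have "gcong (a * r - b * q) (- b * q) r"
      unfolding gcong_def gdvd_def using a by (auto simp: mult.commute)
    moreover have "a * r - b * q \<in> gauss_ints"
      using a assms(2-4) q(1) by blast
    ultimately show "q \<in> S \<inter> cball y (sqrt \<delta>) \<and> a * r - b * q \<in> {m \<in> gauss_ints \<inter> Jball r z y (sqrt \<delta>). gcong m (- b * q) r \<and> m \<noteq> 0}"
      using q yq ne by (simp add: dist_norm norm_minus_commute)
  qed
qed

lemma card_close_fractions_le_integral_Pisum:
  assumes S: "S \<subseteq> cball 0 s \<inter> (gauss_ints - {0})"
    and "b \<in> gauss_ints" "r \<in> gauss_ints" "r \<noteq> 0" "0 < \<delta>" "sqrt \<delta> \<le> s"
    and q_small: "\<And>q. q \<in> S \<Longrightarrow> cmod q * \<epsilon> \<le> sqrt \<delta> * cmod z"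
    and X: "X \<subseteq> {(a, q). a \<in> gauss_ints \<and> q \<in> S \<and> a * r \<noteq> b * q \<and> cmod (a / q - (b / r + z)) \<le> \<epsilon>}"
  shows "card X * (pi * \<delta> / 4) \<le> integral (cball 0 s) (\<lambda>y. real (Pisum S b r z y \<delta>))"
proof -
  have finS: "finite S"
    by (rule finite_subset[OF _ finite_gauss_ints_cball]) (use S in blast)
  have Pisum_integrable: "(\<lambda>y. real (Pisum S b r z y \<delta>)) integrable_on cball 0 s"
    using finS by (intro integrable_Pisum) auto
  show ?thesis
  proof (cases "finite X")
    case True
    have "\<forall>q\<in>S. \<exists>c. cball c (sqrt \<delta> / 2) \<subseteq> cball 0 s \<inter> cball q (sqrt \<delta>)"
      using S assms(5,6) by (intro ballI ex_half_cball_subset_Int_cball) auto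
    then obtain c where c: "\<And>q. q \<in> S \<Longrightarrow> cball (c q) (sqrt \<delta> / 2) \<subseteq> cball 0 s \<inter> cball q (sqrt \<delta>)"
      by metis
    have near: "cmod (y - q) \<le> sqrt \<delta>" if "q \<in> S" "dist (c q) y \<le> sqrt \<delta> / 2" for q y
      using c[OF that(1)] that(2) by (auto simp: dist_norm norm_minus_commute)
    show ?thesis
    proof (rule card_mult_measure_le_integral[where D = "\<lambda>(a, q). cball (c q) (sqrt \<delta> / 2)"])
      fix y
      show "real (card {p \<in> X. y \<in> (\<lambda>(a, q). cball (c q) (sqrt \<delta> / 2)) p}) \<le> real (Pisum S b r z y \<delta>)"
        unfolding of_nat_le_iff using S X assms(2-4) q_small
        by (intro card_close_fractions_le_Pisum[where \<epsilon> = \<epsilon>] finS) (auto intro: near)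
    qed (use True X c assms(5) Pisum_integrable in \<open>auto simp: measure_lborel_cball_complex power_divide\<close>)
  qed (use integral_nonneg[OF Pisum_integrable] in simp)
qed

theorem lemma2:
  fixes Q :: nat and S :: "complex set" and \<Delta> \<tau> \<delta> :: real and b r z :: complex
  assumes S_sub: "S \<subseteq> cball 0 (sqrt (real Q)) \<inter> (gauss_ints - {0})"
    and \<Delta>_pos: "\<Delta> > 0"
    and \<tau>_def: "\<tau> = \<Delta> powr (-1/4)"
    and b_int: "b \<in> gauss_ints" and r_int: "r \<in> gauss_ints"
    and br_coprime: "gcoprime b r"
    and r_pos: "0 < cmod r" and r_le: "cmod r \<le> \<tau>"
    and z_lower: "sqrt \<Delta> \<le> cmod z" and z_upper: "cmod z < 2 / (cmod r * \<tau>)"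
    and \<delta>_pos: "\<delta> > 0"
    and \<delta>_lower: "sqrt (real Q) * sqrt \<Delta> / cmod z \<le> sqrt \<delta>"
    and \<delta>_upper: "sqrt \<delta> \<le> sqrt (real Q)"
  shows "real (Pcount S \<Delta> (b / r + z)) \<le>
    16 + 4 / (pi * \<delta>) * integral (cball 0 (sqrt (real Q))) (\<lambda>y. real (Pisum S b r z y \<delta>))"
proof -
  define I where "I = integral (cball 0 (sqrt (real Q))) (\<lambda>y. real (Pisum S b r z y \<delta>))"
  define T where "T = {(a, q). a \<in> gauss_ints \<and> q \<in> S \<and> gcoprime a q \<and> cmod (a / q - (b / r + z)) \<le> sqrt \<Delta>}"
  define T1 where "T1 = {p \<in> T. fst p * r \<noteq> b * snd p}"
  have r0: "r \<noteq> 0"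
    using r_pos by auto
  have q_small: "cmod q * sqrt \<Delta> \<le> sqrt \<delta> * cmod z" if "q \<in> S" for q
  proof -
    have "0 < cmod z"
      using z_lower real_sqrt_gt_zero[OF \<Delta>_pos] by linarith
    then have "sqrt (real Q) * sqrt \<Delta> \<le> sqrt \<delta> * cmod z"
      using \<delta>_lower by (simp add: divide_le_eq)
    moreover have "cmod q * sqrt \<Delta> \<le> sqrt (real Q) * sqrt \<Delta>"
      using that S_sub \<Delta>_pos by (intro mult_right_mono) auto
    ultimately show ?thesis
      by linarith
  qed
  have "card (T - T1) \<le> 4"
    using S_sub r0 unfolding T_def T1_def
    by (intro card_coprime_fractions_le_4[where w = "b / r"]) (auto simp: field_simps)
  moreover have "real (card T1) * (pi * \<delta>) \<le> 4 * I"
    using card_close_fractions_le_integral_Pisum[OF S_sub b_int r_int r0 \<delta>_pos \<delta>_upper q_small, of T1]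
    unfolding I_def T1_def T_def by fastforce
  then have "real (card T1) \<le> 4 / (pi * \<delta>) * I"
    using \<delta>_pos by (simp add: pos_le_divide_eq)
  moreover have "card T \<le> card (T - T1) + card T1"
    using card_Un_le[of "T - T1" T1] unfolding T1_def by (simp add: Un_absorb2)
  ultimately have "card T \<le> 4 + 4 / (pi * \<delta>) * I"
    by linarith
  then show ?thesis
    unfolding Pcount_def T_def[symmetric] I_def by simp
qed

end
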